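(* Let $k \geq 2$ and let $\Sigma_k$ be an alphabet with $k$ letters. For $n \geq 0$ let $p_k(n)$ be the number of palstars of length $2n$ over $\Sigma_k$, and let $u_k(n)$ be the number of unbordered strings of length $n$ over $\Sigma_k$. Then for all $n \geq 1$, $$p_k(n) = \sum_{1 \leq i \leq n} u_k(i)\, p_k(n-i).$$
   Context: Let $P = \{ x x^R : x \in \Sigma_k^+\}$ be the set of nonempty even-length palindromes over $\Sigma_k$ (here $x^R$ is the reversal of $x$). A palstar is an element of $P^* = \bigcup_{i\ge 0} P^i$, i.e. a (possibly empty) concatenation of nonempty even-length palindromes; in particular the empty string is a palstar, so $p_k(0)=1$. A nonempty string $x$ is a border of a string $y$ if $x \neq y$ and $x$ is both a prefix and a suffix of $y$; $y$ is unbordered if it has no border (so the empty string and every single letter are unbordered, and $u_k(0)=1$). *)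

theory Defs
  imports Main "HOL-Library.Sublist"
begin

definition even_pal :: "'a list \<Rightarrow> bool" where
  "even_pal w \<longleftrightarrow> (\<exists>x. x \<noteq> [] \<and> w = x @ rev x)"

inductive palstar :: "'a list \<Rightarrow> bool" where
  palstar_Nil: "palstar []"
| palstar_app: "even_pal p \<Longrightarrow> palstar w \<Longrightarrow> palstar (p @ w)"

definition is_border :: "'a list \<Rightarrow> 'a list \<Rightarrow> bool" where
  "is_border x y \<longleftrightarrow> x \<noteq> [] \<and> x \<noteq> y \<and> prefix x y \<and> suffix x y"

definition unbordered :: "'a list \<Rightarrow> bool" where
  "unbordered y \<longleftrightarrow> \<not> (\<exists>x. is_border x y)"

definition pal_count :: "'a set \<Rightarrow> nat \<Rightarrow> nat" where
  "pal_count \<Sigma> n = card {w \<in> lists \<Sigma>. length w = 2 * n \<and> palstar w}"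

definition unb_count :: "'a set \<Rightarrow> nat \<Rightarrow> nat" where
  "unb_count \<Sigma> n = card {w \<in> lists \<Sigma>. length w = n \<and> unbordered w}"

end

theory Submission
  imports Defs
begin

text \<open>
  Call an even palindrome prime if it has no proper even palindromic prefix. A nonempty palstar
  factors uniquely as a prime palindrome followed by a palstar: its shortest even palindromic
  prefix is prime, and a prime palindrome \<open>P\<close> occurring as a prefix of an even palindrome
  \<open>p\<close> either equals \<open>p\<close> or satisfies \<open>p = P z P\<close> with \<open>z\<close> an even palindrome, since
  overlapping copies of \<open>P\<close> would produce a shorter even palindromic prefix of \<open>P\<close>. Hence
  \<open>p(n) = (\<Sum>i=1..n. r(i) * p(n - i))\<close>, where \<open>r(i)\<close> counts prime palindromes of length \<open>2i\<close>.

  It remains to show \<open>r = u\<close>. Prime palindromes of length \<open>2n\<close> are the words \<open>x x\<^sup>R\<close> with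
  \<open>x\<close> of length \<open>n\<close> having no even palindromic prefix, and every other word of length \<open>n\<close> begins
  with a unique prime palindrome; so \<open>k^n = r(n) + (\<Sum>j=1..n div 2. r(j) * k^(n - 2j))\<close>.
  A bordered word of length \<open>n\<close> is \<open>b z b\<close> for a unique unbordered \<open>b\<close> (its shortest border,
  which cannot overlap itself), so \<open>u\<close> satisfies the same recurrence, which determines it.
\<close>

lemma prefix_suffix_split:
  assumes "prefix b x" "suffix b x" "2 * length b \<le> length x"
  obtains z where "x = b @ z @ b"
proof -
  obtain u where u: "x = b @ u" using assms(1) by (auto simp: prefix_def)
  obtain w where w: "x = w @ b" using assms(2) by (auto simp: suffix_def)
  have "suffix b u"
    using suffix_length_suffix[of b x u] assms u w by (simp add: suffix_def)
  then obtain z where "u = z @ b" by (auto simp: suffix_def)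
  then show thesis using u by (intro that) simp
qed

lemma overlapping_prefix_suffix:
  assumes "x = b @ z" "x = w @ b" "length w < length b"
  obtains v where "b = w @ v" "b = v @ z"
proof -
  have "prefix w x" "prefix b x" using assms(1,2) by (metis prefix_def)+
  then have "prefix w b" using prefix_length_prefix assms(3) by (metis less_imp_le)
  then obtain v where v: "b = w @ v" by (auto simp: prefix_def)
  then have "b = v @ z" using assms by simp
  with v show thesis by (rule that)
qed

lemma palindrome_prefix_suffix_iff:
  assumes "rev y = y" "prefix p y"
  shows "suffix p y \<longleftrightarrow> rev p = p"
proof
  assume "suffix p y"
  moreover have "suffix (rev p) y" using assms by (metis suffix_to_prefix rev_rev_ident)
  ultimately show "rev p = p"
    by (metis suffix_length_suffix length_rev order_refl suffix_order.antisym)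
next
  assume "rev p = p"
  then show "suffix p y" using assms by (metis suffix_to_prefix)
qed

lemma even_pal_iff: "even_pal w \<longleftrightarrow> w \<noteq> [] \<and> even (length w) \<and> rev w = w"
proof
  assume "even_pal w"
  then show "w \<noteq> [] \<and> even (length w) \<and> rev w = w" by (auto simp: even_pal_def)
next
  assume w: "w \<noteq> [] \<and> even (length w) \<and> rev w = w"
  define x where "x = take (length w div 2) w"
  have "prefix x w" "suffix (rev x) w"
    unfolding x_def using w by (metis take_is_prefix suffix_to_prefix rev_rev_ident)+
  moreover have "2 * length x = length w" using w by (simp add: x_def)
  ultimately have "w = x @ rev x"
    by (metis prefix_def suffix_def append_eq_append_conv length_rev mult_2 add_left_cancel
        length_append)
  moreover have "x \<noteq> []" using w by (auto simp: x_def elim!: evenE intro!: Nat.gr0I)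
  ultimately show "even_pal w" unfolding even_pal_def by blast
qed

definition prime_pal :: "'a list \<Rightarrow> bool" where
  "prime_pal P \<longleftrightarrow> even_pal P \<and> (\<forall>p. strict_prefix p P \<longrightarrow> \<not> even_pal p)"

lemma prime_pal_prefix_eq: "prime_pal P \<Longrightarrow> prime_pal Q \<Longrightarrow> prefix P Q \<Longrightarrow> P = Q"
  by (auto simp: prime_pal_def prefix_order.less_le)

lemma even_pal_prefix_imp_prime_pal_prefix:
  assumes "prefix q x" "even_pal q"
  obtains P where "prime_pal P" "prefix P x"
  using assms
proof (induction q rule: measure_induct_rule[of length])
  case (less q)
  show thesis
  proof (cases "prime_pal q")
    case True
    then show thesis using less.prems by blast
  next
    case False
    then obtain p where "strict_prefix p q" "even_pal p"
      using less.prems(3) by (auto simp: prime_pal_def)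
    then show thesis
      using less.IH[of p] less.prems prefix_length_less
      by (metis prefix_order.dual_order.strict_implies_order prefix_order.order_trans)
  qed
qed

lemma even_pal_overlapping_prefix:
  assumes "rev y = y" "even (length y)" "even_pal p" "strict_prefix p y"
    and "length y < 2 * length p"
  obtains q where "even_pal q" "strict_prefix q p"
proof -
  have p: "p \<noteq> []" "even (length p)" "rev p = p" using assms(3) by (auto simp: even_pal_iff)
  obtain z where z: "y = p @ z" "z \<noteq> []"
    using assms(4) by (auto simp: strict_prefix_def prefix_def)
  have "suffix p y"
    using palindrome_prefix_suffix_iff assms(1,4) p(3) by (metis prefix_order.less_imp_le)
  then obtain w where w: "y = w @ p" by (auto simp: suffix_def)
  have lw: "length w < length p" using w assms(5) by simp
  obtain v where v: "p = w @ v" "p = v @ z" using overlapping_prefix_suffix[OF z(1) w lw] .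
  have "strict_prefix v p" using v(2) z(2) by (simp add: strict_prefix_def)
  moreover have "rev v = v"
    using palindrome_prefix_suffix_iff[OF p(3), of v] v by (metis prefix_def suffix_def)
  moreover have "v \<noteq> []" using lw v(1) by auto
  moreover have "even (length v)" using p(2) assms(2) v(1) w by simp
  ultimately show thesis using that by (simp add: even_pal_iff)
qed

lemma palstar_append: "palstar u \<Longrightarrow> palstar v \<Longrightarrow> palstar (u @ v)"
  by (induction rule: palstar.induct) (auto intro: palstar.intros)

lemma prime_pal_prefix_of_even_pal:
  assumes P: "prime_pal P" and p: "even_pal p" "prefix P p"
  obtains s where "palstar s" "p = P @ s"
proof (cases "2 * length P \<le> length p")
  case True
  have P': "rev P = P" "even (length P)" "even_pal P"
    using P by (auto simp: prime_pal_def even_pal_iff)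
  have p': "rev p = p" "even (length p)" using p by (auto simp: even_pal_iff)
  have "suffix P p" using palindrome_prefix_suffix_iff[OF p'(1) p(2)] P'(1) by simp
  then obtain z where z: "p = P @ z @ P" using prefix_suffix_split p(2) True by blast
  have "P @ rev z @ P = P @ z @ P" using p'(1) P'(1) z by (metis append_assoc rev_append)
  then have "rev z = z" by simp
  moreover have "even (length z)" using p'(2) P'(2) by (subst (asm) z) simp
  ultimately have "palstar (z @ P)"
    using palstar_app[OF P'(3) palstar_Nil] palstar_app[of z "P @ []"]
    by (cases "z = []") (auto simp: even_pal_iff)
  with z show thesis by (intro that) simp_all
next
  case False
  show thesis
  proof (cases "P = p")
    case True
    then show thesis using palstar_Nil by (intro that) simp_all
  next
    case False
    then have "strict_prefix P p" using p(2) by simp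
    then show thesis
      using even_pal_overlapping_prefix[of p P] p \<open>\<not> 2 * length P \<le> length p\<close> P
      by (auto simp: even_pal_iff prime_pal_def)
  qed
qed

lemma palstar_prime_factor:
  assumes "palstar w" "w \<noteq> []"
  obtains P s where "prime_pal P" "palstar s" "w = P @ s"
  using assms
proof cases
  case (palstar_app p v)
  obtain P where P: "prime_pal P" "prefix P p"
    using even_pal_prefix_imp_prime_pal_prefix[of p p] palstar_app(2) by blast
  obtain s where "palstar s" "p = P @ s"
    using prime_pal_prefix_of_even_pal[OF P(1) palstar_app(2) P(2)] .
  then show thesis using P(1) palstar_app(1,3) palstar_append by (intro that) auto
qed simp

lemma prime_pal_append_rev_iff:
  "prime_pal (x @ rev x) \<longleftrightarrow> x \<noteq> [] \<and> (\<forall>p. prefix p x \<longrightarrow> \<not> even_pal p)"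
proof
  assume prime: "prime_pal (x @ rev x)"
  then have "x \<noteq> []" by (auto simp: prime_pal_def even_pal_iff)
  moreover have "strict_prefix p (x @ rev x)" if "prefix p x" for p
    using that \<open>x \<noteq> []\<close> prefix_length_le[OF that]
    by (auto simp: strict_prefix_def prefix_def)
  ultimately show "x \<noteq> [] \<and> (\<forall>p. prefix p x \<longrightarrow> \<not> even_pal p)"
    using prime by (auto simp: prime_pal_def)
next
  assume x: "x \<noteq> [] \<and> (\<forall>p. prefix p x \<longrightarrow> \<not> even_pal p)"
  have "\<not> even_pal p" if "strict_prefix p (x @ rev x)" for p
    using that
  proof (induction p rule: measure_induct_rule[of length])
    case (less p)
    show ?case
    proof
      assume p: "even_pal p"
      show False
      proof (cases "length p \<le> length x")
        case True
        then have "prefix p x"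
          using less.prems prefix_length_prefix[of p "x @ rev x" x] by simp
        then show False using x p by blast
      next
        case False
        then obtain q where "even_pal q" "strict_prefix q p"
          using even_pal_overlapping_prefix[of "x @ rev x" p] less.prems p by auto
        then show False
          using less.IH less.prems prefix_length_less prefix_order.less_trans by blast
      qed
    qed
  qed
  then show "prime_pal (x @ rev x)" using x by (auto simp: prime_pal_def even_pal_def)
qed

lemma is_border_trans: "is_border c b \<Longrightarrow> is_border b x \<Longrightarrow> is_border c x"
  unfolding is_border_def
  by (metis prefix_order.order_trans suffix_order.order_trans prefix_order.antisym)

lemma border_imp_unbordered_border:
  assumes "is_border b x"
  obtains c where "is_border c x" "unbordered c"
  using assms
proof (induction b rule: measure_induct_rule[of length])
  case (less b)
  show thesis
  proof (cases "unbordered b")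
    case False
    then obtain c where "is_border c b" by (auto simp: unbordered_def)
    moreover have "length c < length b"
      using calculation by (simp add: is_border_def prefix_length_less prefix_order.le_neq_trans)
    ultimately show thesis using less is_border_trans by blast
  qed (use less.prems in blast)
qed

lemma unbordered_border_length:
  assumes "is_border b x" "unbordered b"
  shows "2 * length b \<le> length x"
proof (rule ccontr)
  assume long: "\<not> 2 * length b \<le> length x"
  obtain z where z: "x = b @ z" "z \<noteq> []"
    using assms(1) by (auto simp: is_border_def prefix_def)
  obtain w where w: "x = w @ b" using assms(1) by (auto simp: is_border_def suffix_def)
  have lw: "length w < length b" using w long by simp
  obtain v where v: "b = w @ v" "b = v @ z" using overlapping_prefix_suffix[OF z(1) w lw] .
  have "prefix v b" "suffix v b" using v by (metis prefix_def suffix_def)+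
  moreover have "v \<noteq> []" "v \<noteq> b" using v lw z(2) by auto
  ultimately have "is_border v b" by (simp add: is_border_def)
  then show False using assms(2) by (auto simp: unbordered_def)
qed

lemma not_unbordered_iff:
  "\<not> unbordered x \<longleftrightarrow> (\<exists>b z. b \<noteq> [] \<and> unbordered b \<and> x = b @ z @ b)"
proof
  assume "\<not> unbordered x"
  then obtain b where b: "is_border b x" "unbordered b"
    using border_imp_unbordered_border by (auto simp: unbordered_def)
  then obtain z where "x = b @ z @ b"
    using unbordered_border_length prefix_suffix_split by (metis is_border_def)
  then show "\<exists>b z. b \<noteq> [] \<and> unbordered b \<and> x = b @ z @ b"
    using b by (auto simp: is_border_def)
next
  assume "\<exists>b z. b \<noteq> [] \<and> unbordered b \<and> x = b @ z @ b"
  then obtain b z where "b \<noteq> []" "x = b @ z @ b" by blast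
  moreover have "suffix b (b @ z @ b)" by (metis append_assoc suffix_def)
  ultimately have "is_border b x" by (auto simp: is_border_def)
  then show "\<not> unbordered x" by (auto simp: unbordered_def)
qed

lemma unbordered_frame_eq:
  assumes "unbordered b" "unbordered b'" "b \<noteq> []" "b' \<noteq> []"
    and "b @ z @ b = b' @ z' @ b'"
  shows "b = b' \<and> z = z'"
proof -
  have "b = b'"
    if "unbordered b'" "b \<noteq> []" "b @ z @ b = b' @ z' @ b'" "length b \<le> length b'"
    for b b' z z' :: "'a list"
  proof (rule ccontr)
    assume "b \<noteq> b'"
    have "prefix b b'" using that(3,4) prefix_length_prefix[of b "b' @ z' @ b'" b']
      by (metis prefix_def)
    moreover have "suffix b b'" using that(3,4) suffix_length_suffix[of b "b @ z @ b" b']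
      by (metis suffix_def append_assoc)
    ultimately have "is_border b b'" using that(2) \<open>b \<noteq> b'\<close> by (simp add: is_border_def)
    then show False using that(1) by (auto simp: unbordered_def)
  qed
  then have "b = b'" using assms by (metis nat_le_linear)
  then show ?thesis using assms(5) by simp
qed

definition words :: "'a set \<Rightarrow> nat \<Rightarrow> 'a list set" where
  "words \<Sigma> n = {w \<in> lists \<Sigma>. length w = n}"

lemma mem_words: "w \<in> words \<Sigma> n \<longleftrightarrow> set w \<subseteq> \<Sigma> \<and> length w = n"
  by (auto simp: words_def)

lemma finite_words: "finite \<Sigma> \<Longrightarrow> finite (words \<Sigma> n)"
  using finite_lists_length_eq by (simp add: words_def lists_eq_set)

lemma card_words: "finite \<Sigma> \<Longrightarrow> card (words \<Sigma> n) = card \<Sigma> ^ n"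
  using card_lists_length_eq by (simp add: words_def lists_eq_set)

definition palstars :: "'a set \<Rightarrow> nat \<Rightarrow> 'a list set" where
  "palstars \<Sigma> n = {w \<in> words \<Sigma> (2 * n). palstar w}"

definition prime_pals :: "'a set \<Rightarrow> nat \<Rightarrow> 'a list set" where
  "prime_pals \<Sigma> n = {w \<in> words \<Sigma> (2 * n). prime_pal w}"

definition pal_prefix_free_words :: "'a set \<Rightarrow> nat \<Rightarrow> 'a list set" where
  "pal_prefix_free_words \<Sigma> n = {x \<in> words \<Sigma> n. \<forall>p. prefix p x \<longrightarrow> \<not> even_pal p}"

definition unbordered_words :: "'a set \<Rightarrow> nat \<Rightarrow> 'a list set" where
  "unbordered_words \<Sigma> n = {w \<in> words \<Sigma> n. unbordered w}"

lemma card_image_UN_Times: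
  assumes "finite I" "\<And>i. i \<in> I \<Longrightarrow> finite (A i)" "\<And>i. i \<in> I \<Longrightarrow> finite (B i)"
    and "\<And>i j. i \<in> I \<Longrightarrow> j \<in> I \<Longrightarrow> i \<noteq> j \<Longrightarrow> A i \<inter> A j = {}"
    and "inj_on f (\<Union>i\<in>I. A i \<times> B i)"
  shows "card (f ` (\<Union>i\<in>I. A i \<times> B i)) = (\<Sum>i\<in>I. card (A i) * card (B i))"
proof -
  have "card (f ` (\<Union>i\<in>I. A i \<times> B i)) = card (\<Union>i\<in>I. A i \<times> B i)"
    using assms(5) by (rule card_image)
  also have "\<dots> = (\<Sum>i\<in>I. card (A i \<times> B i))"
    using assms(1-4) by (intro card_UN_disjoint) force+
  finally show ?thesis by (simp add: card_cartesian_product)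
qed

lemma inj_on_append_prime_pals: "inj_on (\<lambda>(a, b). a @ b) (Collect prime_pal \<times> UNIV)"
proof (rule inj_onI, clarsimp)
  fix a b a' b' :: "'a list"
  assume "prime_pal a" "prime_pal a'" and eq: "a @ b = a' @ b'"
  then have "prefix a a' \<or> prefix a' a"
    using prefix_same_cases[of a "a' @ b'" a'] by (metis prefix_def)
  then have "a = a'" using \<open>prime_pal a\<close> \<open>prime_pal a'\<close> prime_pal_prefix_eq by metis
  then show "a = a' \<and> b = b'" using eq by simp
qed

lemma palstars_eq_UN:
  assumes "1 \<le> n"
  shows "palstars \<Sigma> n = (\<lambda>(a, b). a @ b) ` (\<Union>i\<in>{1..n}. prime_pals \<Sigma> i \<times> palstars \<Sigma> (n - i))"
    (is "_ = ?R")
proof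
  show "palstars \<Sigma> n \<subseteq> ?R"
  proof
    fix w assume w: "w \<in> palstars \<Sigma> n"
    then have "palstar w" "w \<noteq> []" using assms by (auto simp: palstars_def mem_words)
    then obtain P s where Ps: "prime_pal P" "palstar s" "w = P @ s"
      using palstar_prime_factor by metis
    obtain i where i: "length P = 2 * i" "i \<noteq> 0"
      using Ps(1) unfolding prime_pal_def even_pal_iff by (metis evenE length_0_conv mult_0_right)
    have "i \<in> {1..n}" "P \<in> prime_pals \<Sigma> i" "s \<in> palstars \<Sigma> (n - i)"
      using w Ps i by (auto simp: palstars_def prime_pals_def mem_words)
    then show "w \<in> ?R" using Ps(3) by force
  qed
next
  show "?R \<subseteq> palstars \<Sigma> n"
    by (auto simp: palstars_def prime_pals_def prime_pal_def mem_words intro: palstar_app)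
qed

lemma card_palstars:
  assumes "finite \<Sigma>" "1 \<le> n"
  shows "card (palstars \<Sigma> n) = (\<Sum>i=1..n. card (prime_pals \<Sigma> i) * card (palstars \<Sigma> (n - i)))"
  unfolding palstars_eq_UN[OF assms(2)]
proof (rule card_image_UN_Times)
  show "finite (prime_pals \<Sigma> i)" "finite (palstars \<Sigma> (n - i))" for i
    unfolding prime_pals_def palstars_def using finite_words[OF assms(1)] by simp_all
  show "prime_pals \<Sigma> i \<inter> prime_pals \<Sigma> j = {}" if "i \<noteq> j" for i j
    using that by (auto simp: prime_pals_def mem_words)
  show "inj_on (\<lambda>(a, b). a @ b) (\<Union>i\<in>{1..n}. prime_pals \<Sigma> i \<times> palstars \<Sigma> (n - i))"
    by (rule inj_on_subset[OF inj_on_append_prime_pals]) (auto simp: prime_pals_def)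
qed simp

lemma words_eq_pal_prefix_free_Un:
  "words \<Sigma> n = pal_prefix_free_words \<Sigma> n \<union>
     (\<lambda>(a, b). a @ b) ` (\<Union>j\<in>{1..n div 2}. prime_pals \<Sigma> j \<times> words \<Sigma> (n - 2 * j))"
    (is "_ = _ \<union> ?R")
proof
  show "words \<Sigma> n \<subseteq> pal_prefix_free_words \<Sigma> n \<union> ?R"
  proof
    fix x assume x: "x \<in> words \<Sigma> n"
    show "x \<in> pal_prefix_free_words \<Sigma> n \<union> ?R"
    proof (cases "x \<in> pal_prefix_free_words \<Sigma> n")
      case False
      then obtain q where "prefix q x" "even_pal q"
        using x by (auto simp: pal_prefix_free_words_def)
      then obtain P where P: "prime_pal P" "prefix P x"
        using even_pal_prefix_imp_prime_pal_prefix by blast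
      then obtain s where s: "x = P @ s" by (auto simp: prefix_def)
      obtain j where j: "length P = 2 * j" "j \<noteq> 0"
        using P(1) unfolding prime_pal_def even_pal_iff by (metis evenE length_0_conv mult_0_right)
      have "j \<in> {1..n div 2}" "P \<in> prime_pals \<Sigma> j" "s \<in> words \<Sigma> (n - 2 * j)"
        using x s j P(1) by (auto simp: prime_pals_def mem_words)
      then show ?thesis using s by force
    qed simp
  qed
next
  show "pal_prefix_free_words \<Sigma> n \<union> ?R \<subseteq> words \<Sigma> n"
    by (auto simp: pal_prefix_free_words_def prime_pals_def mem_words)
qed

lemma card_words_prime_pals:
  assumes "finite \<Sigma>"
  shows "card \<Sigma> ^ n = card (pal_prefix_free_words \<Sigma> n) +
           (\<Sum>j=1..n div 2. card (prime_pals \<Sigma> j) * card \<Sigma> ^ (n - 2 * j))"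
proof -
  let ?R = "(\<lambda>(a, b). a @ b) ` (\<Union>j\<in>{1..n div 2}. prime_pals \<Sigma> j \<times> words \<Sigma> (n - 2 * j))"
  have fin: "finite (prime_pals \<Sigma> j)" "finite (pal_prefix_free_words \<Sigma> j)" for j
    unfolding prime_pals_def pal_prefix_free_words_def using finite_words[OF assms] by simp_all
  have "finite ?R"
    by (rule finite_subset[OF _ finite_words[OF assms, of n]])
      (auto simp: prime_pals_def mem_words)
  moreover have "pal_prefix_free_words \<Sigma> n \<inter> ?R = {}"
    by (auto simp: pal_prefix_free_words_def prime_pals_def prime_pal_def)
  ultimately have "card \<Sigma> ^ n = card (pal_prefix_free_words \<Sigma> n) + card ?R"
    using card_words[OF assms, of n] words_eq_pal_prefix_free_Un[of \<Sigma> n]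
    by (simp add: card_Un_disjoint fin)
  also have "card ?R = (\<Sum>j=1..n div 2. card (prime_pals \<Sigma> j) * card \<Sigma> ^ (n - 2 * j))"
  proof (subst card_image_UN_Times)
    show "prime_pals \<Sigma> i \<inter> prime_pals \<Sigma> j = {}" if "i \<noteq> j" for i j
      using that by (auto simp: prime_pals_def mem_words)
    show "inj_on (\<lambda>(a, b). a @ b) (\<Union>j\<in>{1..n div 2}. prime_pals \<Sigma> j \<times> words \<Sigma> (n - 2 * j))"
      by (rule inj_on_subset[OF inj_on_append_prime_pals]) (auto simp: prime_pals_def)
  qed (simp_all add: fin finite_words card_words assms)
  finally show ?thesis .
qed

lemma card_pal_prefix_free_words:
  assumes "1 \<le> n"
  shows "card (pal_prefix_free_words \<Sigma> n) = card (prime_pals \<Sigma> n)"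
proof (rule bij_betw_same_card)
  show "bij_betw (\<lambda>x. x @ rev x) (pal_prefix_free_words \<Sigma> n) (prime_pals \<Sigma> n)"
  proof (rule bij_betw_imageI)
    show "inj_on (\<lambda>x. x @ rev x) (pal_prefix_free_words \<Sigma> n)"
      by (rule inj_onI) (auto simp: pal_prefix_free_words_def mem_words append_eq_append_conv)
    show "(\<lambda>x. x @ rev x) ` pal_prefix_free_words \<Sigma> n = prime_pals \<Sigma> n"
    proof
      show "(\<lambda>x. x @ rev x) ` pal_prefix_free_words \<Sigma> n \<subseteq> prime_pals \<Sigma> n"
        using assms
        by (auto simp: pal_prefix_free_words_def prime_pals_def mem_words prime_pal_append_rev_iff)
    next
      show "prime_pals \<Sigma> n \<subseteq> (\<lambda>x. x @ rev x) ` pal_prefix_free_words \<Sigma> n"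
      proof
        fix P assume P: "P \<in> prime_pals \<Sigma> n"
        then obtain x where x: "P = x @ rev x"
          by (auto simp: prime_pals_def prime_pal_def even_pal_def)
        then have "x \<in> pal_prefix_free_words \<Sigma> n"
          using P prime_pal_append_rev_iff[of x]
          by (auto simp: pal_prefix_free_words_def prime_pals_def mem_words)
        then show "P \<in> (\<lambda>x. x @ rev x) ` pal_prefix_free_words \<Sigma> n" using x by blast
      qed
    qed
  qed
qed

lemma inj_on_unbordered_frame:
  "inj_on (\<lambda>(b, z). b @ z @ b) ({b. b \<noteq> [] \<and> unbordered b} \<times> UNIV)"
  using unbordered_frame_eq by (auto intro!: inj_onI)

lemma words_eq_unbordered_Un:
  "words \<Sigma> n = unbordered_words \<Sigma> n \<union>
     (\<lambda>(b, z). b @ z @ b) ` (\<Union>i\<in>{1..n div 2}. unbordered_words \<Sigma> i \<times> words \<Sigma> (n - 2 * i))"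
    (is "_ = _ \<union> ?R")
proof
  show "words \<Sigma> n \<subseteq> unbordered_words \<Sigma> n \<union> ?R"
  proof
    fix x assume x: "x \<in> words \<Sigma> n"
    show "x \<in> unbordered_words \<Sigma> n \<union> ?R"
    proof (cases "unbordered x")
      case False
      then obtain b z where bz: "b \<noteq> []" "unbordered b" "x = b @ z @ b"
        using not_unbordered_iff by blast
      have x': "set x \<subseteq> \<Sigma>" "n = 2 * length b + length z"
        using x bz(3) by (simp_all add: mem_words)
      have "length b \<in> {1..n div 2}" using x'(2) bz(1) by (simp add: Suc_le_eq)
      moreover have "b \<in> unbordered_words \<Sigma> (length b)" "z \<in> words \<Sigma> (n - 2 * length b)"
        using x' bz by (simp_all add: unbordered_words_def mem_words)
      ultimately show ?thesis using bz(3) by force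
    qed (use x in \<open>simp add: unbordered_words_def\<close>)
  qed
next
  show "unbordered_words \<Sigma> n \<union> ?R \<subseteq> words \<Sigma> n"
    by (auto simp: unbordered_words_def mem_words)
qed

lemma card_words_unbordered:
  assumes "finite \<Sigma>"
  shows "card \<Sigma> ^ n = card (unbordered_words \<Sigma> n) +
           (\<Sum>i=1..n div 2. card (unbordered_words \<Sigma> i) * card \<Sigma> ^ (n - 2 * i))"
proof -
  let ?R = "(\<lambda>(b, z). b @ z @ b) ` (\<Union>i\<in>{1..n div 2}. unbordered_words \<Sigma> i \<times> words \<Sigma> (n - 2 * i))"
  have fin: "finite (unbordered_words \<Sigma> i)" for i
    unfolding unbordered_words_def using finite_words[OF assms] by simp
  have "finite ?R"
    by (rule finite_subset[OF _ finite_words[OF assms, of n]])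
      (auto simp: unbordered_words_def mem_words)
  moreover have "unbordered_words \<Sigma> n \<inter> ?R = {}"
  proof -
    have "\<not> unbordered (b @ z @ b)"
      if "b \<in> unbordered_words \<Sigma> i" "i \<in> {1..n div 2}" for b z i
    proof -
      have "b \<noteq> []" "unbordered b" using that by (auto simp: unbordered_words_def mem_words)
      then show ?thesis using not_unbordered_iff[of "b @ z @ b"] by blast
    qed
    then show ?thesis by (auto simp: unbordered_words_def)
  qed
  ultimately have "card \<Sigma> ^ n = card (unbordered_words \<Sigma> n) + card ?R"
    using card_words[OF assms, of n] words_eq_unbordered_Un[of \<Sigma> n]
    by (simp add: card_Un_disjoint fin)
  also have "card ?R = (\<Sum>i=1..n div 2. card (unbordered_words \<Sigma> i) * card \<Sigma> ^ (n - 2 * i))"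
  proof (subst card_image_UN_Times)
    show "unbordered_words \<Sigma> i \<inter> unbordered_words \<Sigma> j = {}" if "i \<noteq> j" for i j
      using that by (auto simp: unbordered_words_def mem_words)
    show "inj_on (\<lambda>(b, z). b @ z @ b) (\<Union>i\<in>{1..n div 2}. unbordered_words \<Sigma> i \<times> words \<Sigma> (n - 2 * i))"
      by (rule inj_on_subset[OF inj_on_unbordered_frame])
        (auto simp: unbordered_words_def mem_words)
  qed (simp_all add: fin finite_words card_words assms)
  finally show ?thesis .
qed

lemma recurrence_unique:
  fixes a b :: "nat \<Rightarrow> nat" and c :: nat
  assumes "\<And>n. 1 \<le> n \<Longrightarrow> c ^ n = a n + (\<Sum>j=1..n div 2. a j * c ^ (n - 2 * j))"
    and "\<And>n. 1 \<le> n \<Longrightarrow> c ^ n = b n + (\<Sum>j=1..n div 2. b j * c ^ (n - 2 * j))"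
  shows "1 \<le> n \<Longrightarrow> a n = b n"
proof (induction n rule: less_induct)
  case (less n)
  have "(\<Sum>j=1..n div 2. a j * c ^ (n - 2 * j)) = (\<Sum>j=1..n div 2. b j * c ^ (n - 2 * j))"
    using less.IH by (intro sum.cong) auto
  then show ?case using assms[OF less.prems] by simp
qed

lemma card_prime_pals_eq_unbordered:
  assumes "finite \<Sigma>" "1 \<le> n"
  shows "card (prime_pals \<Sigma> n) = card (unbordered_words \<Sigma> n)"
proof (rule recurrence_unique[OF _ card_words_unbordered[OF assms(1)] assms(2)])
  fix m :: nat assume "1 \<le> m"
  then show "card \<Sigma> ^ m = card (prime_pals \<Sigma> m) +
      (\<Sum>j=1..m div 2. card (prime_pals \<Sigma> j) * card \<Sigma> ^ (m - 2 * j))"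
    using card_words_prime_pals[OF assms(1), of m] card_pal_prefix_free_words[of m \<Sigma>] by simp
qed

theorem lemma1:
  fixes \<Sigma> :: "'a set" and k n :: nat
  assumes "finite \<Sigma>" and "card \<Sigma> = k" and "k \<ge> 2" and "n \<ge> 1"
  shows "pal_count \<Sigma> n = (\<Sum>i=1..n. unb_count \<Sigma> i * pal_count \<Sigma> (n - i))"
proof -
  have "pal_count \<Sigma> n = card (palstars \<Sigma> n)"
    by (simp add: pal_count_def palstars_def words_def)
  also have "\<dots> = (\<Sum>i=1..n. card (prime_pals \<Sigma> i) * card (palstars \<Sigma> (n - i)))"
    using card_palstars assms(1,4) by blast
  also have "\<dots> = (\<Sum>i=1..n. unb_count \<Sigma> i * pal_count \<Sigma> (n - i))"
    using card_prime_pals_eq_unbordered[OF assms(1)]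
    by (intro sum.cong) (simp_all add: unb_count_def pal_count_def unbordered_words_def
        palstars_def words_def)
  finally show ?thesis .
qed

end
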